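(* Let $N$ be an odd natural number and let $b_1,\dots,b_N$ be integers such that $b_1,b_3,b_5,\dots,b_N$ (the entries with odd index) are all even. Suppose $p,q$ are relatively prime integers with $q\neq 0$ and $p/q=[b_1,b_2,\dots,b_N]$, where $$[b_1,b_2,\dots,b_N]=b_1-\cfrac{1}{b_2-\cfrac{1}{b_3-\cdots-\cfrac{1}{b_N}}}$$ (all intermediate denominators being nonzero). Then $$p\equiv(-1)^{\frac{N-1}{2}}(b_1+b_3+\cdots+b_N)\pmod 4.$$ *)

theory Defs
  imports "HOL-Number_Theory.Number_Theory"
begin

text \<open>Negative (minus) continued fraction [b1,...,bN] = b1 - 1/(b2 - 1/(... - 1/bN)).
  The list [b1,...,bN] is represented 0-based.\<close>
fun ncf :: "int list \<Rightarrow> rat" where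
  "ncf [] = 0"
| "ncf [b] = of_int b"
| "ncf (b # c # cs) = of_int b - 1 / ncf (c # cs)"

end

theory Submission
  imports Defs
begin

text \<open>Writing the continued fraction as K(b1..bN) / K(b2..bN) with the minus continuant K, this
  quotient is already in lowest terms, so p = \<plusminus>K(b1..bN). The recursion
  K(b # c # cs) = b K(c # cs) - K(cs) then carries the congruence modulo 4 from cs to b # c # cs:
  under the parity hypothesis K of an odd-length list is even and K of its tail is odd, so
  b K(c # cs) \<equiv> b and the sign flips. The sign of p is irrelevant modulo 4 because the
  even-position sum is even.\<close>

lemma all_even_positions_Cons_Cons:
  "(\<forall>i < length (x # y # zs). even i \<longrightarrow> P ((x # y # zs) ! i))
     \<longleftrightarrow> P x \<and> (\<forall>i < length zs. even i \<longrightarrow> P (zs ! i))"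
  by (simp add: All_less_Suc2)

lemma sum_even_positions_Cons_Cons:
  fixes x y :: "'a::comm_monoid_add"
  shows "(\<Sum>i\<in>{i. i < length (x # y # zs) \<and> even i}. (x # y # zs) ! i)
       = x + (\<Sum>i\<in>{i. i < length zs \<and> even i}. zs ! i)"
proof -
  have positions: "{i. i < length (x # y # zs) \<and> even i}
      = insert 0 ((Suc \<circ> Suc) ` {i. i < length zs \<and> even i})"
    by (auto simp: image_iff less_Suc_eq_0_disj)
  have "(\<Sum>i\<in>insert 0 ((Suc \<circ> Suc) ` {i. i < length zs \<and> even i}). (x # y # zs) ! i)
      = x + (\<Sum>i\<in>{i. i < length zs \<and> even i}. zs ! i)"
    by (subst sum.insert) (auto simp: sum.reindex inj_on_def)
  then show ?thesis unfolding positions .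
qed

lemma even_sum_even_positions:
  assumes "\<forall>i < length xs. even i \<longrightarrow> even (xs ! i)"
  shows "even (\<Sum>i\<in>{i. i < length xs \<and> even i}. xs ! i :: int)"
  using assms by (intro dvd_sum) auto

lemma coprime_frac_eq_imp_eq_or_eq_neg:
  fixes p q P Q :: int
  assumes "coprime p q" and "coprime P Q" and "q \<noteq> 0" and "Q \<noteq> 0"
    and "(of_int p / of_int q :: 'a::field_char_0) = of_int P / of_int Q"
  shows "p = P \<or> p = -P"
proof -
  from assms(3-5) have "of_int (p * Q) = (of_int (P * q) :: 'a)"
    by (simp add: field_simps)
  then have eq: "p * Q = P * q" by (simp only: of_int_eq_iff)
  then have "p dvd P * q" and "P dvd p * Q" by (metis dvd_triv_left)+
  with assms(1,2) have "p dvd P" and "P dvd p" by (simp_all add: coprime_dvd_mult_left_iff)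
  then have "\<bar>p\<bar> = \<bar>P\<bar>" by (rule zdvd_antisym_abs)
  then show ?thesis by (simp add: abs_eq_iff)
qed

lemma cong_mod4_neg_if_even:
  fixes x y :: int
  assumes "[x = y] (mod 4)" and "even y"
  shows "[-x = y] (mod 4)"
proof -
  obtain m where "x - y = 4 * m" using assms(1) by (auto simp: cong_iff_dvd_diff)
  moreover obtain y' where "y = 2 * y'" using assms(2) by blast
  ultimately have "-x - y = 4 * (- m - y')" by (simp add: algebra_simps)
  then show ?thesis by (simp add: cong_iff_dvd_diff)
qed

lemma cong_mod4_continuant_step:
  fixes b k K s E :: int
  assumes "even b" and "odd k" and "[K = s * E] (mod 4)" and "s = 1 \<or> s = -1"
  shows "[b * k - K = -s * (b + E)] (mod 4)"
proof -
  obtain b' k' where b: "b = 2 * b'" and k: "k = 2 * k' + 1"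
    using assms(1,2) by (auto elim!: evenE oddE)
  obtain m where "K - s * E = 4 * m"
    using assms(3) by (auto simp: cong_iff_dvd_diff)
  then have "b * k - K - (-s * (b + E)) = 4 * (b' * k' + b' * ((1 + s) div 2) - m)"
    using assms(4) by (auto simp: b k algebra_simps)
  then show ?thesis by (simp add: cong_iff_dvd_diff)
qed

fun continuant :: "int list \<Rightarrow> int" where
  "continuant [] = 1"
| "continuant [b] = b"
| "continuant (b # c # cs) = b * continuant (c # cs) - continuant cs"

lemma coprime_continuant_tl: "coprime (continuant xs) (continuant (tl xs))"
proof (induction xs rule: continuant.induct)
  case (3 b c cs)
  then have "coprime (continuant (c # cs)) (continuant cs)" by simp
  then show ?case
    using gcd_add_mult[of "continuant (c # cs)" b "- continuant cs"]
    by (simp add: coprime_iff_gcd_eq_1 gcd.commute)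
qed simp_all

lemma ncf_eq_continuant:
  assumes "xs \<noteq> []" and "\<forall>k \<in> {1..<length xs}. ncf (drop k xs) \<noteq> 0"
  shows "continuant (tl xs) \<noteq> 0 \<and> ncf xs = of_int (continuant xs) / of_int (continuant (tl xs))"
  using assms
proof (induction xs rule: continuant.induct)
  case (3 b c cs)
  have "\<forall>k \<in> {1..<length (c # cs)}. ncf (drop k (c # cs)) \<noteq> 0"
  proof
    fix k assume "k \<in> {1..<length (c # cs)}"
    then have "Suc k \<in> {1..<length (b # c # cs)}" by simp
    with "3.prems"(2) show "ncf (drop k (c # cs)) \<noteq> 0" by fastforce
  qed
  with "3.IH" have IH: "continuant cs \<noteq> 0"
    "ncf (c # cs) = of_int (continuant (c # cs)) / of_int (continuant cs)"
    by auto
  from "3.prems"(2) have "ncf (drop 1 (b # c # cs)) \<noteq> 0" by force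
  with IH have "continuant (c # cs) \<noteq> 0" by simp
  moreover have "ncf (b # c # cs) = of_int b - of_int (continuant cs) / of_int (continuant (c # cs))"
    using IH(2) by simp
  ultimately show ?case by (simp add: field_simps)
qed simp_all

lemma continuant_parity:
  assumes "odd (length xs)" and "\<forall>i < length xs. even i \<longrightarrow> even (xs ! i)"
  shows "even (continuant xs) \<and> odd (continuant (tl xs))"
  using assms
proof (induction xs rule: continuant.induct)
  case (3 b c cs)
  then obtain d ds where cs: "cs = d # ds" by (cases cs) auto
  from "3.prems"(2) have "even b" and "\<forall>i < length cs. even i \<longrightarrow> even (cs ! i)"
    unfolding all_even_positions_Cons_Cons by simp_all
  with "3.IH" "3.prems"(1) show ?case by (simp add: cs)
qed simp_all

lemma continuant_cong_mod4:
  assumes "odd (length xs)" and "\<forall>i < length xs. even i \<longrightarrow> even (xs ! i)"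
  shows "[continuant xs = (-1) ^ ((length xs - 1) div 2) * (\<Sum>i\<in>{i. i < length xs \<and> even i}. xs ! i)] (mod 4)"
  using assms
proof (induction xs rule: continuant.induct)
  case (3 b c cs)
  let ?s = "(-1::int) ^ ((length cs - 1) div 2)"
  from "3.prems"(2) have "even b" and even_cs: "\<forall>i < length cs. even i \<longrightarrow> even (cs ! i)"
    unfolding all_even_positions_Cons_Cons by simp_all
  have "odd (length cs)" using "3.prems"(1) by simp
  then have len: "(length (b # c # cs) - 1) div 2 = Suc ((length cs - 1) div 2)"
    by (auto elim: oddE)
  have "[b * continuant (c # cs) - continuant cs
        = -?s * (b + (\<Sum>i\<in>{i. i < length cs \<and> even i}. cs ! i))] (mod 4)"
  proof (rule cong_mod4_continuant_step)
    show "even b" by fact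
    show "odd (continuant (c # cs))" using continuant_parity[OF "3.prems"] by simp
    show "[continuant cs = ?s * (\<Sum>i\<in>{i. i < length cs \<and> even i}. cs ! i)] (mod 4)"
      using "3.IH" \<open>odd (length cs)\<close> even_cs by blast
    show "?s = 1 \<or> ?s = -1" by (simp add: minus_one_power_iff)
  qed
  then show ?case
    unfolding continuant.simps sum_even_positions_Cons_Cons len power_Suc by simp
next
  case (2 b)
  have "{i. i < length [b] \<and> even i} = {0}" by auto
  then show ?case by simp
qed simp

theorem lemma7:
  fixes bs :: "int list" and p q :: int
  assumes "odd (length bs)"
    and "\<forall>i < length bs. even i \<longrightarrow> even (bs ! i)"
    and "\<forall>k \<in> {1..<length bs}. ncf (drop k bs) \<noteq> 0"
    and "coprime p q" and "q \<noteq> 0"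
    and "of_int p / of_int q = ncf bs"
  shows "[p = (-1) ^ ((length bs - 1) div 2) * (\<Sum>i\<in>{i. i < length bs \<and> even i}. bs ! i)] (mod 4)"
proof -
  let ?E = "(\<Sum>i\<in>{i. i < length bs \<and> even i}. bs ! i)"
  have "bs \<noteq> []" using assms(1) by auto
  with assms(3) have "continuant (tl bs) \<noteq> 0"
    and "ncf bs = of_int (continuant bs) / of_int (continuant (tl bs))"
    using ncf_eq_continuant by blast+
  with assms(4-6) coprime_continuant_tl have "p = continuant bs \<or> p = - continuant bs"
    by (metis coprime_frac_eq_imp_eq_or_eq_neg)
  moreover have "[continuant bs = (-1) ^ ((length bs - 1) div 2) * ?E] (mod 4)"
    using continuant_cong_mod4 assms(1,2) by blast
  moreover have "even ((-1) ^ ((length bs - 1) div 2) * ?E)"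
    using even_sum_even_positions assms(2) by simp
  ultimately show ?thesis using cong_mod4_neg_if_even by blast
qed

end
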